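(* Let $d\ge2$, $k\in\{1,\dots,d-1\}$, and let $\mathbf r=(r_1,r_2,r_3)\in(0,\infty)^3$ be strictly admissible. For every $y_3\in\mathbb R^{d-k}$ with $|y_3|<r_3$, the set $S(y_3)$ of all $(y_1,y_2)\in\mathbb R^{d-k}\times\mathbb R^{d-k}$ satisfying $|y_j|<r_j$ ($j=1,2$), $y_1+y_2+y_3=0$, and such that $\big((r_j^2-|y_j|^2)^{1/2}\big)_{1\le j\le3}$ is strictly admissible, is nonempty and has positive $(d-k)$-dimensional Lebesgue measure. Moreover this measure is a lower semicontinuous function of $(y_3,\mathbf r)$ on the set of pairs with $\mathbf r$ strictly admissible and $|y_3|<r_3$.
   Context: A triple $(s_1,s_2,s_3)$ of positive reals is strictly admissible if $s_k<s_i+s_j$ for every permutation $(i,j,k)$ of $(1,2,3)$. The $(d-k)$-dimensional measure of $S(y_3)$ is the Lebesgue measure of its projection $\{y_1:(y_1,y_2)\in S(y_3)\}$ (equivalently onto $y_2$), since $y_2=-y_1-y_3$. *)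

theory Defs
  imports "HOL-Analysis.Analysis"
begin

definition strictly_admissible :: "real \<Rightarrow> real \<Rightarrow> real \<Rightarrow> bool" where
  "strictly_admissible s1 s2 s3 \<longleftrightarrow>
     0 < s1 \<and> 0 < s2 \<and> 0 < s3 \<and> s3 < s1 + s2 \<and> s1 < s2 + s3 \<and> s2 < s1 + s3"

definition S_set :: "real \<Rightarrow> real \<Rightarrow> real \<Rightarrow> 'a::euclidean_space \<Rightarrow> ('a \<times> 'a) set" where
  "S_set r1 r2 r3 y3 = {(y1, y2). norm y1 < r1 \<and> norm y2 < r2 \<and> y1 + y2 + y3 = 0 \<and>
     strictly_admissible (sqrt (r1\<^sup>2 - (norm y1)\<^sup>2)) (sqrt (r2\<^sup>2 - (norm y2)\<^sup>2))
                         (sqrt (r3\<^sup>2 - (norm y3)\<^sup>2))}"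

text \<open>Projection of S(y3) onto the y1 coordinate; its Lebesgue measure is the
  (d-k)-dimensional measure of S(y3).\<close>
definition S_proj :: "real \<Rightarrow> real \<Rightarrow> real \<Rightarrow> 'a::euclidean_space \<Rightarrow> 'a set" where
  "S_proj r1 r2 r3 y3 = fst ` S_set r1 r2 r3 y3"

end

theory Submission
  imports Defs
begin

text \<open>For positive reals, strict admissibility of \<open>(s1, s2, s3)\<close> is positivity of Heron's form
  \<open>H(s1\<^sup>2, s2\<^sup>2, s3\<^sup>2)\<close>. Write \<open>R\<^sub>j = r\<^sub>j\<^sup>2\<close>, \<open>a = |y3|\<^sup>2\<close> and put \<open>y1 = -t y3\<close>, \<open>y2 = (t - 1) y3\<close> with \<open>t\<close>
  determined by \<open>R2 = R1 + R3 - 2 t R3\<close>. The new squared radii are \<open>R1 - t\<^sup>2 a\<close>, \<open>R2 - (1 - t)\<^sup>2 a\<close>,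
  \<open>R3 - a\<close>, and \<open>H\<close> of them is exactly \<open>(R3 - a) / R3\<close> times \<open>H(R1, R2, R3) > 0\<close>, so \<open>S(y3)\<close> is
  nonempty. All defining conditions are strict inequalities between continuous functions of
  \<open>(y3, r, y1)\<close>, so the projections of \<open>S(y3)\<close> are the bounded slices of one open set. Such a
  slice has positive measure, and a compact inner approximation of one slice lies inside all
  nearby slices by the tube lemma, which gives lower semicontinuity.\<close>

text \<open>\<open>heron (a\<^sup>2) (b\<^sup>2) (c\<^sup>2)\<close> is sixteen times the squared area of the triangle with sides
  \<open>a, b, c\<close>.\<close>
definition heron :: "real \<Rightarrow> real \<Rightarrow> real \<Rightarrow> real" where
  "heron A B C = 2*A*B + 2*B*C + 2*C*A - A\<^sup>2 - B\<^sup>2 - C\<^sup>2"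

lemma heron_squares:
  "heron (a\<^sup>2) (b\<^sup>2) (c\<^sup>2) = (a + b + c) * ((b + c - a) * (a + c - b) * (a + b - c))"
  unfolding heron_def by algebra

lemma pos_if_pos_product:
  fixes u v w :: real
  assumes "0 < u + v" "0 < v + w" "0 < u + w" "0 < u * v * w"
  shows "0 < u \<and> 0 < v \<and> 0 < w"
  using assms by (smt (verit) mult_nonneg_nonpos mult_nonpos_nonneg mult_pos_pos mult_nonneg_nonneg)

lemma strictly_admissible_iff_heron:
  "strictly_admissible a b c \<longleftrightarrow> 0 < a \<and> 0 < b \<and> 0 < c \<and> 0 < heron (a\<^sup>2) (b\<^sup>2) (c\<^sup>2)"
proof
  assume "strictly_admissible a b c"
  then show "0 < a \<and> 0 < b \<and> 0 < c \<and> 0 < heron (a\<^sup>2) (b\<^sup>2) (c\<^sup>2)"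
    unfolding strictly_admissible_def heron_squares by (auto intro!: mult_pos_pos)
next
  assume pos: "0 < a \<and> 0 < b \<and> 0 < c \<and> 0 < heron (a\<^sup>2) (b\<^sup>2) (c\<^sup>2)"
  then have "0 < (a + b + c) * ((b + c - a) * (a + c - b) * (a + b - c))"
    by (simp only: heron_squares)
  moreover have "0 < a + b + c" using pos by simp
  ultimately have "0 < (b + c - a) * (a + c - b) * (a + b - c)"
    using zero_less_mult_pos by blast
  then have "0 < b + c - a \<and> 0 < a + c - b \<and> 0 < a + b - c"
    using pos by (intro pos_if_pos_product) auto
  with pos show "strictly_admissible a b c"
    unfolding strictly_admissible_def by auto
qed

lemma heron_shrink:
  fixes R1 R2 R3 t a :: real
  assumes heron: "0 < heron R1 R2 R3" and a: "0 \<le> a" "a < R3"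
    and t: "R2 = R1 + R3 - 2 * t * R3"
  shows "0 < R1 - t\<^sup>2 * a" "0 < R2 - (1 - t)\<^sup>2 * a"
    and "0 < heron (R1 - t\<^sup>2 * a) (R2 - (1 - t)\<^sup>2 * a) (R3 - a)"
proof -
  have R3: "0 < R3" using a by simp
  have "heron R1 R2 R3 = 4 * R3 * (R1 - t\<^sup>2 * R3)"
    "heron R1 R2 R3 = 4 * R3 * (R2 - (1 - t)\<^sup>2 * R3)"
    unfolding heron_def t by algebra+
  with heron R3 have "t\<^sup>2 * R3 < R1" "(1 - t)\<^sup>2 * R3 < R2"
    by (simp_all add: zero_less_mult_iff)
  moreover have "t\<^sup>2 * a \<le> t\<^sup>2 * R3" "(1 - t)\<^sup>2 * a \<le> (1 - t)\<^sup>2 * R3"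
    using a by (simp_all add: mult_left_mono)
  ultimately show "0 < R1 - t\<^sup>2 * a" "0 < R2 - (1 - t)\<^sup>2 * a"
    by linarith+
  have "R3 * heron (R1 - t\<^sup>2 * a) (R2 - (1 - t)\<^sup>2 * a) (R3 - a) = (R3 - a) * heron R1 R2 R3"
    unfolding heron_def t by algebra
  also have "\<dots> > 0" using heron a by simp
  finally show "0 < heron (R1 - t\<^sup>2 * a) (R2 - (1 - t)\<^sup>2 * a) (R3 - a)"
    using R3 by (simp add: zero_less_mult_iff)
qed

lemma S_set_collinear_point:
  fixes y3 :: "'a::euclidean_space"
  assumes adm: "strictly_admissible r1 r2 r3" and y3: "norm y3 < r3"
  defines "t \<equiv> (r1\<^sup>2 + r3\<^sup>2 - r2\<^sup>2) / (2 * r3\<^sup>2)"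
  shows "(- (t *\<^sub>R y3), (t - 1) *\<^sub>R y3) \<in> S_set r1 r2 r3 y3"
proof -
  have r: "0 < r1" "0 < r2" "0 < r3" and heron: "0 < heron (r1\<^sup>2) (r2\<^sup>2) (r3\<^sup>2)"
    using adm unfolding strictly_admissible_iff_heron by auto
  have t: "r2\<^sup>2 = r1\<^sup>2 + r3\<^sup>2 - 2 * t * r3\<^sup>2"
    unfolding t_def using r by (simp add: field_simps)
  have a: "0 \<le> (norm y3)\<^sup>2" "(norm y3)\<^sup>2 < r3\<^sup>2"
    using y3 by (auto intro: power_strict_mono)
  note shrink = heron_shrink[OF heron a t]
  have n1: "(norm (- (t *\<^sub>R y3)))\<^sup>2 = t\<^sup>2 * (norm y3)\<^sup>2"
    and n2: "(norm ((t - 1) *\<^sub>R y3))\<^sup>2 = (1 - t)\<^sup>2 * (norm y3)\<^sup>2"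
    by (simp_all add: power_mult_distrib power2_commute)
  have "norm (- (t *\<^sub>R y3)) < r1" "norm ((t - 1) *\<^sub>R y3) < r2"
    using shrink(1,2) r by (simp_all only: flip: n1 n2) (auto intro: power_less_imp_less_base)
  moreover have "strictly_admissible (sqrt (r1\<^sup>2 - (norm (- (t *\<^sub>R y3)))\<^sup>2))
      (sqrt (r2\<^sup>2 - (norm ((t - 1) *\<^sub>R y3))\<^sup>2)) (sqrt (r3\<^sup>2 - (norm y3)\<^sup>2))"
    unfolding strictly_admissible_iff_heron n1 n2 using shrink a by simp
  ultimately show ?thesis
    unfolding S_set_def by (simp add: algebra_simps)
qed

lemma open_slice:
  fixes W :: "('a::topological_space \<times> 'b::topological_space) set"
  assumes "open W"
  shows "open {x. (q, x) \<in> W}"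
  using open_vimage[OF assms, of "Pair q"] by (simp add: vimage_def continuous_on_Pair)

lemma measure_open_slice_lower_semicontinuous:
  fixes W :: "('a::topological_space \<times> 'b::euclidean_space) set"
  assumes W: "open W" and bounded: "\<And>q. bounded {x. (q, x) \<in> W}"
    and c: "c < measure lebesgue {x. (p, x) \<in> W}"
  shows "\<forall>\<^sub>F q in nhds p. c < measure lebesgue {x. (q, x) \<in> W}"
proof -
  define S where "S q = {x. (q, x) \<in> W}" for q
  have S: "S q \<in> lmeasurable" for q
    unfolding S_def using bounded open_slice[OF W] by (rule lmeasurable_open)
  obtain T where T: "closed T" "T \<subseteq> S p" "S p - T \<in> lmeasurable"
      "emeasure lebesgue (S p - T) < ennreal (measure lebesgue (S p) - c)"
    using sets_lebesgue_inner_closed[of "S p" "measure lebesgue (S p) - c"] S c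
    by (auto simp: S_def fmeasurable_def)
  have "compact T"
    using T(1,2) bounded[of p] unfolding S_def by (meson bounded_subset compact_eq_bounded_closed)
  then have T_meas: "T \<in> lmeasurable" by (rule lmeasurable_compact)
  have "measure lebesgue (S p - T) < measure lebesgue (S p) - c"
    using T(4) emeasure_eq_measure2[OF T(3)] c by (metis ennreal_less_iff measure_nonneg S_def)
  moreover have "measure lebesgue (S p - T) = measure lebesgue (S p) - measure lebesgue T"
    using S[of p] T_meas T(2) by (intro measure_Diff) (auto simp: fmeasurable_def)
  ultimately have cT: "c < measure lebesgue T" by simp
  have "{p} \<times> T \<subseteq> W" using T(2) unfolding S_def by auto
  then obtain X where X: "p \<in> X" "open X" "X \<times> T \<subseteq> W"
    using Elementary_Topology.tube_lemma[OF \<open>compact T\<close> W] by blast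
  have "c < measure lebesgue (S q)" if "q \<in> X" for q
  proof -
    have "T \<subseteq> S q" using X(3) that unfolding S_def by auto
    then have "measure lebesgue T \<le> measure lebesgue (S q)"
      using T_meas S[of q] by (intro measure_mono_fmeasurable) (auto simp: fmeasurable_def)
    with cT show ?thesis by simp
  qed
  with X show ?thesis unfolding S_def eventually_nhds by blast
qed

lemma emeasure_lebesgue_open_pos:
  fixes S :: "'a::euclidean_space set"
  assumes "open S" "x \<in> S"
  shows "0 < emeasure lebesgue S"
proof (rule ccontr)
  assume "\<not> 0 < emeasure lebesgue S"
  then have "S \<in> null_sets lebesgue"
    using assms(1) by (simp add: null_sets_def zero_less_iff_neq_zero)
  then have "AE y \<in> S in lebesgue. y \<in> {}"
    using AE_not_in by (auto elim!: eventually_mono)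
  then show False
    using mem_closed_if_AE_lebesgue_open[OF assms(1) closed_empty _ assms(2)] by simp
qed

lemma S_proj_eq: "S_proj r1 r2 r3 y3 = {y1. (y1, - y1 - y3) \<in> S_set r1 r2 r3 y3}"
proof -
  have "y2 = - y1 - y3" if "(y1, y2) \<in> S_set r1 r2 r3 y3" for y1 y2
    using that unfolding S_set_def by (simp add: algebra_simps eq_neg_iff_add_eq_0)
  then show ?thesis unfolding S_proj_def by force
qed

lemma open_S_set_graph:
  "open {((y3 :: 'a::euclidean_space, r1, r2, r3), y1). (y1, - y1 - y3) \<in> S_set r1 r2 r3 y3}"
proof -
  have "{((y3 :: 'a, r1, r2, r3), y1). (y1, - y1 - y3) \<in> S_set r1 r2 r3 y3} =
    {z. let y3 = fst (fst z); r1 = fst (snd (fst z)); r2 = fst (snd (snd (fst z)));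
            r3 = snd (snd (snd (fst z))); y1 = snd z in
        norm y1 < r1 \<and> norm (- y1 - y3) < r2 \<and>
        strictly_admissible (sqrt (r1\<^sup>2 - (norm y1)\<^sup>2)) (sqrt (r2\<^sup>2 - (norm (- y1 - y3))\<^sup>2))
          (sqrt (r3\<^sup>2 - (norm y3)\<^sup>2))}"
    by (auto simp: S_set_def)
  also have "open \<dots>"
    unfolding Let_def strictly_admissible_def
    by (intro open_Collect_conj open_Collect_less continuous_intros)
  finally show ?thesis .
qed

lemma S_proj_subset_ball: "S_proj r1 r2 r3 y3 \<subseteq> ball 0 r1"
  unfolding S_proj_def S_set_def by auto

theorem lemma3p1:
  fixes d k :: nat
  assumes "2 \<le> d" and "1 \<le> k" and "k \<le> d - 1"
    and "CARD('n::finite) = d - k"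
  shows "(\<forall>r1 r2 r3 (y3 :: real ^ 'n). strictly_admissible r1 r2 r3 \<and> norm y3 < r3 \<longrightarrow>
            S_set r1 r2 r3 y3 \<noteq> {} \<and> emeasure lebesgue (S_proj r1 r2 r3 y3) > 0)
    \<and> (let D = {(y3 :: real ^ 'n, (r1, r2, r3)). strictly_admissible r1 r2 r3 \<and> norm y3 < r3};
           F = (\<lambda>(y3 :: real ^ 'n, (r1, r2, r3)). measure lebesgue (S_proj r1 r2 r3 y3))
       in \<forall>p\<in>D. \<forall>c. c < F p \<longrightarrow> (\<forall>\<^sub>F q in at p within D. c < F q))"
proof -
  \<comment> \<open>The dimension \<open>d - k\<close> enters only through the index type \<open>'n\<close>.\<close>
  define W :: "(((real ^ 'n) \<times> real \<times> real \<times> real) \<times> (real ^ 'n)) set"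
    where "W = {((y3, r1, r2, r3), y1). (y1, - y1 - y3) \<in> S_set r1 r2 r3 y3}"
  have W: "open W" unfolding W_def by (rule open_S_set_graph)
  have slice: "S_proj r1 r2 r3 y3 = {x. ((y3, r1, r2, r3), x) \<in> W}" for r1 r2 r3 y3
    unfolding W_def S_proj_eq by simp
  have "S_set r1 r2 r3 y3 \<noteq> {} \<and> emeasure lebesgue (S_proj r1 r2 r3 y3) > 0"
    if r: "strictly_admissible r1 r2 r3" "norm y3 < r3" for r1 r2 r3 and y3 :: "real ^ 'n"
  proof -
    obtain y where y: "y \<in> S_set r1 r2 r3 y3"
      using S_set_collinear_point[OF r] by blast
    then have "fst y \<in> {x. ((y3, r1, r2, r3), x) \<in> W}"
      unfolding slice[symmetric] S_proj_def by blast
    then have "0 < emeasure lebesgue (S_proj r1 r2 r3 y3)"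
      unfolding slice by (rule emeasure_lebesgue_open_pos[OF open_slice[OF W]])
    with y show ?thesis by blast
  qed
  moreover have "\<forall>\<^sub>F q in nhds p. c < measure lebesgue {x. (q, x) \<in> W}"
    if "c < measure lebesgue {x. (p, x) \<in> W}" for p c
  proof (rule measure_open_slice_lower_semicontinuous[OF W _ that])
    fix q :: "(real ^ 'n) \<times> real \<times> real \<times> real"
    obtain y3 r1 r2 r3 where "q = (y3, r1, r2, r3)" by (cases q) auto
    then show "bounded {x. (q, x) \<in> W}"
      using S_proj_subset_ball[of r1 r2 r3 y3] unfolding slice by (metis bounded_ball bounded_subset)
  qed
  then have "\<forall>\<^sub>F q in at p within D. c < measure lebesgue {x. (q, x) \<in> W}"
    if "c < measure lebesgue {x. (p, x) \<in> W}" for p c D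
    using that filter_leD[OF at_within_le_nhds] by blast
  ultimately show ?thesis by (auto simp: slice)
qed

end
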